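(* Assume the matrix $\mathcal H_{W,0}=\begin{pmatrix}\mathcal H_{\alpha\alpha,0}&\mathcal H_{\alpha\gamma,0}\\ \mathcal H_{\gamma\alpha,0}&\mathcal H_{\gamma\gamma,0}\end{pmatrix}$ is invertible. Under Assumptions 1 and 2, when the propensity score models $e_X(X;\alpha)$ and $e_W(X,W;\alpha,\gamma)$ are correctly specified, for every $\delta$, $$\Sigma^{\mathrm{eps}}_W(\delta)=\Sigma^{\mathrm{fps}}_W(\delta)-\mathcal D_{W1}(\delta)\mathcal H_{\alpha\alpha,0}^{-1}\mathcal D_{W1}^T(\delta)-\mathcal M(\delta),$$ where $\mathcal M(\delta)=\{\mathcal D_{W2}(\delta)-\mathcal D_{W1}(\delta)\mathcal H_{\alpha\alpha,0}^{-1}\mathcal H_{\alpha\gamma,0}\}\mathcal F^{-1}\{\mathcal D_{W2}(\delta)-\mathcal D_{W1}(\delta)\mathcal H_{\alpha\alpha,0}^{-1}\mathcal H_{\alpha\gamma,0}\}^T$ and $\mathcal F=\mathcal H_{\gamma\gamma,0}-\mathcal H_{\gamma\alpha,0}\mathcal H_{\alpha\alpha,0}^{-1}\mathcal H_{\alpha\gamma,0}$.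
   Context: Data: i.i.d. copies of $(Y,Z,X,W)$, binary $Z$, $Y=ZY_1+(1-Z)Y_0$, $\tau=E(Y_1-Y_0)$. Assumption 1: $Z\perp(Y_0,Y_1)\mid X$, $0<\Pr(Z=1\mid X)<1$. Assumption 2: $Z\perp(W,Y_0,Y_1)\mid X$. $e_0(X)=\Pr(Z=1\mid X)$. Propensity models $e_X(X;\alpha)$ and $e_W(X,W;\alpha,\gamma)$ with $e_W(X,W;\alpha,0)=e_X(X;\alpha)$; correctly specified means $e_X(X;\alpha_0)=e_0(X)=e_W(X,W;\alpha_0,\gamma_0)$ with $\gamma_0=0$. Let $S_\alpha(X,W,Z;\alpha,\gamma)$, $S_\gamma(X,W,Z;\alpha,\gamma)$ be the $\alpha$- and $\gamma$-scores of $Z\log e_W+(1-Z)\log(1-e_W)$, all evaluated at $(\alpha_0,\gamma_0)$ below, and $\mathcal H_{ab,0}=E(S_aS_b^T)$ for $a,b\in\{\alpha,\gamma\}$. Outcome working model $Q_W(X,W,z;\delta)$ and $\varphi_W(Y,X,W,Z;\alpha,\gamma,\delta)=\frac{ZY}{e_W}-\frac{(1-Z)Y}{1-e_W}-\frac{Z-e_W}{e_W}Q_W(X,W,1;\delta)+\frac{e_W-Z}{1-e_W}Q_W(X,W,0;\delta)-\tau$, $e_W=e_W(X,W;\alpha,\gamma)$. $\mathcal D_{W1}(\delta)=-E\{\partial\varphi_W(\cdot;\alpha_0,\gamma_0,\delta)/\partial\alpha^T\}$, $\mathcal D_{W2}(\delta)=-E\{\partial\varphi_W(\cdot;\alpha_0,\gamma_0,\delta)/\partial\gamma^T\}$,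 $\mathcal D_W=(\mathcal D_{W1},\mathcal D_{W2})$. $\Sigma^{\mathrm{fps}}_W(\delta)=\mathrm{var}\{\varphi_W(\cdot;\alpha_0,\gamma_0,\delta)\}$ and $\Sigma^{\mathrm{eps}}_W(\delta)=\mathrm{var}\{\varphi_W(\cdot;\alpha_0,\gamma_0,\delta)-\mathcal D_W(\delta)\mathcal H_{W,0}^{-1}(S_\alpha^T,S_\gamma^T)^T\}$ (asymptotic variances of the doubly robust estimator with known, resp. maximum-likelihood-estimated, propensity score). *)

theory Defs
  imports "HOL-Probability.Probability" "HOL-Analysis.Analysis"
begin

definition pgrad :: "(real^'n \<Rightarrow> real) \<Rightarrow> real^'n \<Rightarrow> real^'n" where
  "pgrad f a = (\<chi> i. deriv (\<lambda>t. f (a + t *\<^sub>R axis i 1)) 0)"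

definition stack :: "real^'a \<Rightarrow> real^'b \<Rightarrow> real^('a + 'b)" where
  "stack u v = (\<chi> i. case i of Inl j \<Rightarrow> u $ j | Inr k \<Rightarrow> v $ k)"

definition outer :: "real^'m \<Rightarrow> real^'n \<Rightarrow> real^'n^'m" where
  "outer u v = (\<chi> i j. u $ i * v $ j)"

definition vexp :: "'o measure \<Rightarrow> ('o \<Rightarrow> real^'n) \<Rightarrow> real^'n" where
  "vexp M f = (\<chi> i. \<integral>\<omega>. f \<omega> $ i \<partial>M)"

definition mexp :: "'o measure \<Rightarrow> ('o \<Rightarrow> real^'n^'m) \<Rightarrow> real^'n^'m" where
  "mexp M f = (\<chi> i j. \<integral>\<omega>. f \<omega> $ i $ j \<partial>M)"

definition var :: "'o measure \<Rightarrow> ('o \<Rightarrow> real) \<Rightarrow> real" where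
  "var M f = (\<integral>\<omega>. (f \<omega> - (\<integral>\<omega>'. f \<omega>' \<partial>M))\<^sup>2 \<partial>M)"

definition sqint :: "'o measure \<Rightarrow> ('o \<Rightarrow> real) \<Rightarrow> bool" where
  "sqint M f \<longleftrightarrow> f \<in> borel_measurable M \<and> integrable M (\<lambda>\<omega>. (f \<omega>)\<^sup>2)"

definition cond_indep :: "'o measure \<Rightarrow> 'o measure \<Rightarrow> 'o set set \<Rightarrow> 'o set set \<Rightarrow> bool" where
  "cond_indep M F A B \<longleftrightarrow> (\<forall>a\<in>A. \<forall>b\<in>B. AE \<omega> in M.
      real_cond_exp M F (indicator (a \<inter> b)) \<omega> =
      real_cond_exp M F (indicator a) \<omega> * real_cond_exp M F (indicator b) \<omega>)"

definition phiW :: "real \<Rightarrow> real \<Rightarrow> real \<Rightarrow> real \<Rightarrow> real \<Rightarrow> real \<Rightarrow> real" where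
  "phiW tau y z e q1 q0 =
     z * y / e - (1 - z) * y / (1 - e) - (z - e) / e * q1 + (e - z) / (1 - e) * q0 - tau"

definition loglik :: "real \<Rightarrow> real \<Rightarrow> real" where
  "loglik z e = z * ln e + (1 - z) * ln (1 - e)"

definition obsY :: "('o \<Rightarrow> real) \<Rightarrow> ('o \<Rightarrow> real) \<Rightarrow> ('o \<Rightarrow> real) \<Rightarrow> 'o \<Rightarrow> real" where
  "obsY Y0 Y1 Z \<omega> = Z \<omega> * Y1 \<omega> + (1 - Z \<omega>) * Y0 \<omega>"

definition ate :: "'o measure \<Rightarrow> ('o \<Rightarrow> real) \<Rightarrow> ('o \<Rightarrow> real) \<Rightarrow> real" where
  "ate M Y0 Y1 = (\<integral>\<omega>. Y1 \<omega> - Y0 \<omega> \<partial>M)"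

definition sigX :: "'o measure \<Rightarrow> ('o \<Rightarrow> 'x) \<Rightarrow> 'x measure \<Rightarrow> 'o measure" where
  "sigX M X MX = vimage_algebra (space M) X MX"

definition e0 :: "'o measure \<Rightarrow> ('o \<Rightarrow> 'x) \<Rightarrow> 'x measure \<Rightarrow> ('o \<Rightarrow> real) \<Rightarrow> 'o \<Rightarrow> real" where
  "e0 M X MX Z = real_cond_exp M (sigX M X MX) (indicator {\<omega> \<in> space M. Z \<omega> = 1})"

definition phiRV :: "'o measure \<Rightarrow> ('o \<Rightarrow> real) \<Rightarrow> ('o \<Rightarrow> real) \<Rightarrow> ('o \<Rightarrow> real) \<Rightarrow> ('o \<Rightarrow> 'x)
     \<Rightarrow> ('o \<Rightarrow> 'w) \<Rightarrow> ('x \<Rightarrow> 'w \<Rightarrow> real^'a \<Rightarrow> real^'g \<Rightarrow> real) \<Rightarrow> ('x \<Rightarrow> 'w \<Rightarrow> real \<Rightarrow> 'd \<Rightarrow> real)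
     \<Rightarrow> 'd \<Rightarrow> real^'a \<Rightarrow> real^'g \<Rightarrow> 'o \<Rightarrow> real" where
  "phiRV M Y0 Y1 Z X W eW QW \<delta> a g \<omega> =
     phiW (ate M Y0 Y1) (obsY Y0 Y1 Z \<omega>) (Z \<omega>) (eW (X \<omega>) (W \<omega>) a g)
          (QW (X \<omega>) (W \<omega>) 1 \<delta>) (QW (X \<omega>) (W \<omega>) 0 \<delta>)"

definition scoreA :: "('o \<Rightarrow> real) \<Rightarrow> ('o \<Rightarrow> 'x) \<Rightarrow> ('o \<Rightarrow> 'w)
     \<Rightarrow> ('x \<Rightarrow> 'w \<Rightarrow> real^'a \<Rightarrow> real^'g \<Rightarrow> real) \<Rightarrow> real^'a \<Rightarrow> 'o \<Rightarrow> real^'a" where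
  "scoreA Z X W eW \<alpha>0 \<omega> = pgrad (\<lambda>a. loglik (Z \<omega>) (eW (X \<omega>) (W \<omega>) a 0)) \<alpha>0"

definition scoreG :: "('o \<Rightarrow> real) \<Rightarrow> ('o \<Rightarrow> 'x) \<Rightarrow> ('o \<Rightarrow> 'w)
     \<Rightarrow> ('x \<Rightarrow> 'w \<Rightarrow> real^'a \<Rightarrow> real^'g \<Rightarrow> real) \<Rightarrow> real^'a \<Rightarrow> 'o \<Rightarrow> real^'g" where
  "scoreG Z X W eW \<alpha>0 \<omega> = pgrad (\<lambda>g. loglik (Z \<omega>) (eW (X \<omega>) (W \<omega>) \<alpha>0 g)) 0"

definition Hmat :: "'o measure \<Rightarrow> ('o \<Rightarrow> real^'m) \<Rightarrow> ('o \<Rightarrow> real^'n) \<Rightarrow> real^'n^'m" where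
  "Hmat M S T = mexp M (\<lambda>\<omega>. outer (S \<omega>) (T \<omega>))"

end

theory Submission
  imports Defs
begin

text \<open>
  With estimated propensity score the estimator's influence function is the residual of
  phi after projection on the joint score S = (S_alpha, S_gamma), so
  Sigma_eps = Sigma_fps - D_W H_W^-1 D_W^T once we know E S = 0 and E (phi S) = D_W.
  Both identities are checked coordinatewise, along a path of propensity models through the
  true e_0: there phi times the score plus the path derivative of phi equals
  (Q_1 - Q_0 - tau) times the score, and a function of (X, W) times the score has mean zero
  because, by Assumption 2, Z may be replaced by e_0(X) in E (Z k(X, W)).
  Inverting H_W blockwise around the Schur complement F of H_alpha_alpha then splits
  D_W H_W^-1 D_W^T into D_W1 H_alpha_alpha^-1 D_W1^T + M(delta).
\<close>

section \<open>Block matrices and the Schur complement\<close>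

lemma stack_nth [simp]: "stack u v $ Inl i = u $ i" "stack u v $ Inr k = v $ k"
  by (simp_all add: stack_def)

lemma stack_eq_iff: "stack a b = stack c d \<longleftrightarrow> a = c \<and> b = d"
  by (auto simp: vec_eq_iff stack_def split: sum.split)

lemma stack_eq_0_iff [simp]: "stack u v = 0 \<longleftrightarrow> u = 0 \<and> v = 0"
  by (auto simp: vec_eq_iff stack_def split: sum.split)

lemma stack_components: "stack (\<chi> i. p $ Inl i) (\<chi> k. p $ Inr k) = p"
  by (simp add: vec_eq_iff stack_def split: sum.split)

lemma sum_UNIV_sum_type:
  "(\<Sum>j\<in>UNIV. g j) = (\<Sum>i\<in>UNIV. g (Inl i)) + (\<Sum>k\<in>UNIV. g (Inr k))"
  for g :: "'a::finite + 'b::finite \<Rightarrow> 'c::comm_monoid_add"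
  using sum.Plus[of "UNIV :: 'a set" "UNIV :: 'b set" g] by (simp add: comp_def)

lemma inner_stack: "stack a b \<bullet> stack c d = a \<bullet> c + b \<bullet> d"
  by (simp add: inner_vec_def sum_UNIV_sum_type)

lemma matrix_vector_mult_uminus_right: "A *v (- x) = - (A *v x)" for A :: "real^'n^'m"
  by (simp add: vec_eq_iff matrix_vector_mult_def sum_negf)

lemma matrix_inv_inverse:
  fixes A :: "real^'n^'n"
  assumes "invertible A"
  shows "A ** matrix_inv A = mat 1" and "matrix_inv A ** A = mat 1"
proof -
  from assms obtain A' where "A ** A' = mat 1 \<and> A' ** A = mat 1"
    unfolding invertible_def by blast
  then have "A ** matrix_inv A = mat 1 \<and> matrix_inv A ** A = mat 1"
    unfolding matrix_inv_def by (rule someI)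
  then show "A ** matrix_inv A = mat 1" and "matrix_inv A ** A = mat 1" by auto
qed

lemma matrix_inv_cancel:
  fixes A :: "real^'n^'n"
  assumes "invertible A"
  shows "matrix_inv A *v (A *v x) = x" and "A *v (matrix_inv A *v x) = x"
  by (simp_all add: matrix_vector_mul_assoc matrix_inv_inverse[OF assms])

lemma transpose_matrix_inv_symmetric:
  fixes A :: "real^'n^'n"
  assumes "invertible A" and "transpose A = A"
  shows "transpose (matrix_inv A) = matrix_inv A"
proof -
  have "transpose (matrix_inv A) ** A = mat 1"
    using matrix_inv_inverse(1)[OF assms(1)] assms(2) by (metis matrix_transpose_mul transpose_mat)
  then have "transpose (matrix_inv A) = transpose (matrix_inv A) ** (A ** matrix_inv A)"
    using matrix_inv_inverse(1)[OF assms(1)] by simp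
  also have "\<dots> = matrix_inv A"
    by (simp add: matrix_mul_assoc \<open>transpose (matrix_inv A) ** A = mat 1\<close>)
  finally show ?thesis .
qed

lemma invertible_if_ker_trivial:
  fixes A :: "real^'n^'n"
  assumes "\<And>x. A *v x = 0 \<Longrightarrow> x = 0"
  shows "invertible A"
  using assms matrix_left_invertible_ker invertible_left_inverse by blast

lemma invertible_Schur_complement:
  fixes H :: "real^('a::finite + 'b::finite)^('a + 'b)"
    and A :: "real^'a^'a" and B :: "real^'b^'a" and C :: "real^'a^'b" and E :: "real^'b^'b"
  assumes H: "\<And>u v. H *v stack u v = stack (A *v u + B *v v) (C *v u + E *v v)"
    and "invertible H" and "invertible A"
  shows "invertible (E - C ** matrix_inv A ** B)"
proof (rule invertible_if_ker_trivial)
  fix v assume v: "(E - C ** matrix_inv A ** B) *v v = 0"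
  define u where "u = - (matrix_inv A *v (B *v v))"
  have "H *v stack u v = stack (A *v u + B *v v) (C *v u + E *v v)" by (rule H)
  also have "A *v u + B *v v = 0"
    using matrix_inv_cancel(2)[OF \<open>invertible A\<close>] by (simp add: u_def matrix_vector_mult_uminus_right)
  also have "C *v u + E *v v = (E - C ** matrix_inv A ** B) *v v"
    by (simp add: u_def matrix_vector_mult_uminus_right matrix_vector_mult_diff_rdistrib
        matrix_vector_mul_assoc matrix_mul_assoc)
  finally have "H *v stack u v = 0" using v by simp
  then show "v = 0"
    using matrix_inv_cancel(1)[OF \<open>invertible H\<close>, of "stack u v"] by simp
qed

lemma inner_matrix_inv_block:
  fixes H :: "real^('a::finite + 'b::finite)^('a + 'b)"
    and A :: "real^'a^'a" and B :: "real^'b^'a" and C :: "real^'a^'b" and E :: "real^'b^'b"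
    and a :: "real^'a" and b :: "real^'b"
  assumes H: "\<And>u v. H *v stack u v = stack (A *v u + B *v v) (C *v u + E *v v)"
    and "invertible H" and "invertible A" and "transpose A = A" and "transpose B = C"
  defines "F \<equiv> E - C ** matrix_inv A ** B"
    and "R \<equiv> b - a v* (matrix_inv A ** B)"
  shows "stack a b \<bullet> (matrix_inv H *v stack a b) = a \<bullet> (matrix_inv A *v a) + R \<bullet> (matrix_inv F *v R)"
proof -
  let ?Ai = "matrix_inv A"
  obtain c1 c2 where c: "matrix_inv H *v stack a b = stack c1 c2"
    by (metis stack_components)
  have "stack (A *v c1 + B *v c2) (C *v c1 + E *v c2) = stack a b"
    using matrix_inv_cancel(2)[OF \<open>invertible H\<close>, of "stack a b"] by (simp add: c H)
  then have first: "A *v c1 + B *v c2 = a" and second: "C *v c1 + E *v c2 = b"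
    by (simp_all add: stack_eq_iff)
  have "A *v c1 = a - B *v c2"
    using first by (simp add: algebra_simps)
  then have c1: "c1 = ?Ai *v (a - B *v c2)"
    using matrix_inv_cancel(1)[OF \<open>invertible A\<close>, of c1] by simp
  have "a v* (?Ai ** B) = transpose (?Ai ** B) *v a"
    by simp
  also have "\<dots> = C *v (?Ai *v a)"
    using transpose_matrix_inv_symmetric[OF \<open>invertible A\<close> \<open>transpose A = A\<close>] \<open>transpose B = C\<close>
    by (simp add: matrix_transpose_mul matrix_vector_mul_assoc)
  finally have row: "a v* (?Ai ** B) = C *v (?Ai *v a)" .
  have "F *v c2 = R"
    using second unfolding c1 F_def R_def row
    by (simp add: algebra_simps matrix_vector_mul_assoc matrix_mul_assoc)
  then have c2: "c2 = matrix_inv F *v R"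
    using matrix_inv_cancel(1)[OF invertible_Schur_complement[OF H \<open>invertible H\<close> \<open>invertible A\<close>], of c2]
    by (simp add: F_def)
  have "stack a b \<bullet> (matrix_inv H *v stack a b) = a \<bullet> c1 + b \<bullet> c2"
    by (simp add: c inner_stack)
  also have "\<dots> = a \<bullet> (?Ai *v a) - (a v* (?Ai ** B)) \<bullet> c2 + b \<bullet> c2"
    by (simp add: c1 matrix_vector_mult_diff_distrib inner_diff_right dot_lmul_matrix
        matrix_vector_mul_assoc)
  also have "\<dots> = a \<bullet> (?Ai *v a) + R \<bullet> (matrix_inv F *v R)"
    by (simp add: c2 R_def inner_diff_left)
  finally show ?thesis .
qed

section \<open>Second moments and Gram matrices\<close>

lemma integrable_mult_sqint:
  assumes "sqint M f" and "sqint M g"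
  shows "integrable M (\<lambda>\<omega>. f \<omega> * g \<omega>)"
proof (rule Bochner_Integration.integrable_bound)
  show "integrable M (\<lambda>\<omega>. (f \<omega>)\<^sup>2 + (g \<omega>)\<^sup>2)"
    using assms by (simp add: sqint_def)
  show "(\<lambda>\<omega>. f \<omega> * g \<omega>) \<in> borel_measurable M"
    using assms by (simp add: sqint_def borel_measurable_times)
  have "\<bar>f \<omega>\<bar> * \<bar>g \<omega>\<bar> \<le> (f \<omega>)\<^sup>2 + (g \<omega>)\<^sup>2" for \<omega>
    using sum_squares_bound[of "\<bar>f \<omega>\<bar>" "\<bar>g \<omega>\<bar>"] mult_nonneg_nonneg[of "\<bar>f \<omega>\<bar>" "\<bar>g \<omega>\<bar>"]
    by (simp only: power2_abs) linarith
  then show "AE \<omega> in M. norm (f \<omega> * g \<omega>) \<le> norm ((f \<omega>)\<^sup>2 + (g \<omega>)\<^sup>2)"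
    by (simp add: abs_mult)
qed

lemma sqint_add:
  assumes "sqint M f" and "sqint M g"
  shows "sqint M (\<lambda>\<omega>. f \<omega> + g \<omega>)"
proof -
  have "integrable M (\<lambda>\<omega>. (f \<omega>)\<^sup>2 + (g \<omega>)\<^sup>2 + 2 * (f \<omega> * g \<omega>))"
    using assms integrable_mult_sqint[OF assms] by (auto simp: sqint_def)
  then show ?thesis
    using assms by (simp add: sqint_def power2_sum algebra_simps borel_measurable_add)
qed

lemma sqint_cmult: "sqint M f \<Longrightarrow> sqint M (\<lambda>\<omega>. c * f \<omega>)"
  by (simp add: sqint_def power_mult_distrib borel_measurable_times)

lemma sqint_sum:
  "finite I \<Longrightarrow> (\<And>i. i \<in> I \<Longrightarrow> sqint M (f i)) \<Longrightarrow> sqint M (\<lambda>\<omega>. \<Sum>i\<in>I. f i \<omega>)"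
  by (induction I rule: finite_induct) (simp_all add: sqint_def[of M "\<lambda>_. 0"] sqint_add)

lemma sqint_inner:
  fixes S :: "'o \<Rightarrow> real^'n"
  assumes "\<And>j. sqint M (\<lambda>\<omega>. S \<omega> $ j)"
  shows "sqint M (\<lambda>\<omega>. c \<bullet> S \<omega>)"
  unfolding inner_vec_def using assms by (auto intro!: sqint_sum sqint_cmult)

lemma (in finite_measure) integrable_sqint: "sqint M f \<Longrightarrow> integrable M f"
  using integrable_mult_sqint[of M f "\<lambda>_. 1"] by (simp add: sqint_def)

lemma integral_mult_inner:
  fixes S :: "'o \<Rightarrow> real^'n"
  assumes "\<And>j. sqint M (\<lambda>\<omega>. S \<omega> $ j)" and "sqint M g"
  shows "(\<integral>\<omega>. g \<omega> * (c \<bullet> S \<omega>) \<partial>M) = (\<Sum>j\<in>UNIV. c $ j * (\<integral>\<omega>. g \<omega> * S \<omega> $ j \<partial>M))"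
proof -
  have "(\<integral>\<omega>. g \<omega> * (c \<bullet> S \<omega>) \<partial>M) = (\<integral>\<omega>. (\<Sum>j\<in>UNIV. c $ j * (g \<omega> * S \<omega> $ j)) \<partial>M)"
    by (simp add: inner_vec_def sum_distrib_left algebra_simps)
  also have "\<dots> = (\<Sum>j\<in>UNIV. c $ j * (\<integral>\<omega>. g \<omega> * S \<omega> $ j \<partial>M))"
    using integrable_mult_sqint[OF assms(2) assms(1)] by simp
  finally show ?thesis .
qed

lemma Hmat_nth: "Hmat M S T $ i $ j = (\<integral>\<omega>. S \<omega> $ i * T \<omega> $ j \<partial>M)"
  by (simp add: Hmat_def mexp_def outer_def)

lemma transpose_Hmat: "transpose (Hmat M S T) = Hmat M T S"
  by (simp add: vec_eq_iff transpose_def Hmat_nth mult.commute)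

lemma Hmat_stack_mult:
  "Hmat M (\<lambda>\<omega>. stack (S \<omega>) (T \<omega>)) (\<lambda>\<omega>. stack (S \<omega>) (T \<omega>)) *v stack u v
     = stack (Hmat M S S *v u + Hmat M S T *v v) (Hmat M T S *v u + Hmat M T T *v v)"
  by (auto simp: vec_eq_iff matrix_vector_mult_def sum_UNIV_sum_type Hmat_nth stack_def
      split: sum.split)

lemma Hmat_mult_nth:
  fixes S :: "'o \<Rightarrow> real^'n"
  assumes "\<And>i. sqint M (\<lambda>\<omega>. S \<omega> $ i)" and "sqint M (\<lambda>\<omega>. T \<omega> $ j)"
  shows "(Hmat M T S *v v) $ j = (\<integral>\<omega>. T \<omega> $ j * (v \<bullet> S \<omega>) \<partial>M)"
  using integral_mult_inner[OF assms, of v]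
  by (simp add: matrix_vector_mult_def Hmat_nth mult.commute)

lemma inner_Hmat_mult:
  fixes S :: "'o \<Rightarrow> real^'n"
  assumes "\<And>j. sqint M (\<lambda>\<omega>. S \<omega> $ j)"
  shows "v \<bullet> (Hmat M S S *v v) = (\<integral>\<omega>. (v \<bullet> S \<omega>)\<^sup>2 \<partial>M)"
  using integral_mult_inner[OF assms sqint_inner[OF assms], of v v]
  by (simp add: power2_eq_square inner_vec_def Hmat_mult_nth[OF assms assms] mult.commute)

lemma invertible_Hmat_stack_left:
  fixes S :: "'o \<Rightarrow> real^'a" and T :: "'o \<Rightarrow> real^'b"
  assumes inv: "invertible (Hmat M (\<lambda>\<omega>. stack (S \<omega>) (T \<omega>)) (\<lambda>\<omega>. stack (S \<omega>) (T \<omega>)))"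
    and S: "\<And>i. sqint M (\<lambda>\<omega>. S \<omega> $ i)" and T: "\<And>k. sqint M (\<lambda>\<omega>. T \<omega> $ k)"
  shows "invertible (Hmat M S S)"
proof (rule invertible_if_ker_trivial)
  fix u assume "Hmat M S S *v u = 0"
  then have "(\<integral>\<omega>. (u \<bullet> S \<omega>)\<^sup>2 \<partial>M) = 0"
    by (simp add: inner_Hmat_mult[OF S, symmetric])
  moreover have "integrable M (\<lambda>\<omega>. (u \<bullet> S \<omega>)\<^sup>2)"
    using sqint_inner[OF S, of u] by (simp add: sqint_def)
  ultimately have "AE \<omega> in M. u \<bullet> S \<omega> = 0"
    by (simp add: integral_nonneg_eq_0_iff_AE)
  then have "(Hmat M T S *v u) $ k = 0" for k
    by (subst Hmat_mult_nth[OF S T]) (auto intro!: integral_eq_zero_AE elim!: eventually_mono)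
  then have "Hmat M T S *v u = 0"
    by (simp add: vec_eq_iff)
  then have "Hmat M (\<lambda>\<omega>. stack (S \<omega>) (T \<omega>)) (\<lambda>\<omega>. stack (S \<omega>) (T \<omega>)) *v stack u 0 = 0"
    using \<open>Hmat M S S *v u = 0\<close> by (simp add: Hmat_stack_mult)
  then show "u = 0"
    using matrix_inv_cancel(1)[OF inv, of "stack u 0"] by simp
qed

lemma inner_matrix_inv_Hmat_stack:
  fixes S :: "'o \<Rightarrow> real^'a" and T :: "'o \<Rightarrow> real^'b"
  assumes "invertible (Hmat M (\<lambda>\<omega>. stack (S \<omega>) (T \<omega>)) (\<lambda>\<omega>. stack (S \<omega>) (T \<omega>)))"
    and "\<And>i. sqint M (\<lambda>\<omega>. S \<omega> $ i)" and "\<And>k. sqint M (\<lambda>\<omega>. T \<omega> $ k)"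
  shows "stack a b \<bullet> (matrix_inv (Hmat M (\<lambda>\<omega>. stack (S \<omega>) (T \<omega>)) (\<lambda>\<omega>. stack (S \<omega>) (T \<omega>)))
           *v stack a b)
       = a \<bullet> (matrix_inv (Hmat M S S) *v a)
         + (b - a v* (matrix_inv (Hmat M S S) ** Hmat M S T))
           \<bullet> (matrix_inv (Hmat M T T - Hmat M T S ** matrix_inv (Hmat M S S) ** Hmat M S T)
               *v (b - a v* (matrix_inv (Hmat M S S) ** Hmat M S T)))"
  by (rule inner_matrix_inv_block[OF Hmat_stack_mult assms(1) invertible_Hmat_stack_left[OF assms]
        transpose_Hmat transpose_Hmat])

context finite_measure
begin

lemma var_diff_inner:
  fixes S :: "'a \<Rightarrow> real^'n"
  assumes f: "sqint M f" and S: "\<And>j. sqint M (\<lambda>\<omega>. S \<omega> $ j)"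
    and mean_S: "\<And>j. (\<integral>\<omega>. S \<omega> $ j \<partial>M) = 0"
    and cov: "\<And>j. (\<integral>\<omega>. f \<omega> * S \<omega> $ j \<partial>M) = D $ j"
  shows "var M (\<lambda>\<omega>. f \<omega> - c \<bullet> S \<omega>) = var M f - 2 * (c \<bullet> D) + c \<bullet> (Hmat M S S *v c)"
proof -
  define m where "m = (\<integral>\<omega>. f \<omega> \<partial>M)"
  have one: "sqint M (\<lambda>_. 1)" by (simp add: sqint_def)
  have cS: "sqint M (\<lambda>\<omega>. c \<bullet> S \<omega>)" by (rule sqint_inner[OF S])
  have fm: "sqint M (\<lambda>\<omega>. f \<omega> - m)"
    using sqint_add[OF f sqint_cmult[OF one, of "- m"]] by simp
  have "(\<integral>\<omega>. c \<bullet> S \<omega> \<partial>M) = 0"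
    using integral_mult_inner[OF S one, of c] mean_S by simp
  then have mean: "(\<integral>\<omega>. f \<omega> - c \<bullet> S \<omega> \<partial>M) = m"
    using integrable_sqint[OF f] integrable_sqint[OF cS] by (simp add: m_def)
  have "(\<integral>\<omega>. (f \<omega> - m) * S \<omega> $ j \<partial>M) = D $ j" for j
    using integrable_mult_sqint[OF f S] integrable_sqint[OF S[of j]] mean_S[of j] cov[of j]
    by (simp add: left_diff_distrib)
  then have cross: "(\<integral>\<omega>. (f \<omega> - m) * (c \<bullet> S \<omega>) \<partial>M) = c \<bullet> D"
    using integral_mult_inner[OF S fm, of c] by (simp add: inner_vec_def)
  have "var M (\<lambda>\<omega>. f \<omega> - c \<bullet> S \<omega>)
      = (\<integral>\<omega>. (f \<omega> - m)\<^sup>2 - 2 * ((f \<omega> - m) * (c \<bullet> S \<omega>)) + (c \<bullet> S \<omega>)\<^sup>2 \<partial>M)"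
    unfolding var_def mean by (simp add: power2_eq_square algebra_simps)
  also have "\<dots> = (\<integral>\<omega>. (f \<omega> - m)\<^sup>2 \<partial>M) - 2 * (\<integral>\<omega>. (f \<omega> - m) * (c \<bullet> S \<omega>) \<partial>M)
      + (\<integral>\<omega>. (c \<bullet> S \<omega>)\<^sup>2 \<partial>M)"
    using fm cS integrable_mult_sqint[OF fm cS] by (simp add: sqint_def)
  also have "\<dots> = var M f - 2 * (c \<bullet> D) + c \<bullet> (Hmat M S S *v c)"
    by (simp add: cross inner_Hmat_mult[OF S] var_def flip: m_def)
  finally show ?thesis .
qed

lemma var_minus_projection:
  fixes S :: "'a \<Rightarrow> real^'n"
  assumes "sqint M f" and "\<And>j. sqint M (\<lambda>\<omega>. S \<omega> $ j)"
    and "\<And>j. (\<integral>\<omega>. S \<omega> $ j \<partial>M) = 0"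
    and "\<And>j. (\<integral>\<omega>. f \<omega> * S \<omega> $ j \<partial>M) = D $ j"
    and H: "invertible (Hmat M S S)"
  shows "var M (\<lambda>\<omega>. f \<omega> - D \<bullet> (matrix_inv (Hmat M S S) *v S \<omega>))
       = var M f - D \<bullet> (matrix_inv (Hmat M S S) *v D)"
proof -
  define c where "c = matrix_inv (Hmat M S S) *v D"
  have "transpose (matrix_inv (Hmat M S S)) = matrix_inv (Hmat M S S)"
    by (rule transpose_matrix_inv_symmetric[OF H transpose_Hmat])
  then have "D \<bullet> (matrix_inv (Hmat M S S) *v x) = c \<bullet> x" for x
    by (metis c_def dot_lmul_matrix transpose_matrix_vector)
  then have "var M (\<lambda>\<omega>. f \<omega> - D \<bullet> (matrix_inv (Hmat M S S) *v S \<omega>))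
      = var M f - 2 * (c \<bullet> D) + c \<bullet> (Hmat M S S *v c)"
    using var_diff_inner[OF assms(1-4)] by simp
  also have "\<dots> = var M f - D \<bullet> c"
    using matrix_inv_cancel(2)[OF H, of D] by (simp add: c_def inner_commute)
  finally show ?thesis by (simp add: c_def)
qed

end

section \<open>Derivatives in the propensity score\<close>

lemma has_real_derivative_loglik:
  assumes "0 < e" and "e < 1"
  shows "(loglik z has_real_derivative z / e - (1 - z) / (1 - e)) (at e)"
  unfolding loglik_def[abs_def] using assms
  by (auto intro!: derivative_eq_intros simp: divide_simps) (simp add: algebra_simps)

lemma phiW_eq_fractions:
  assumes "e \<noteq> 0" and "e \<noteq> 1"
  shows "phiW tau y z e q1 q0 = z * (y - q1) / e - (1 - z) * (y - q0) / (1 - e) + (q1 - q0 - tau)"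
proof -
  have "1 - e \<noteq> 0" using assms(2) by simp
  with assms(1) show ?thesis by (simp add: phiW_def divide_simps) (simp add: algebra_simps)
qed

lemma has_real_derivative_phiW:
  assumes "0 < e" and "e < 1"
  shows "((\<lambda>e. phiW tau y z e q1 q0) has_real_derivative
           - (z * (y - q1) / e\<^sup>2 + (1 - z) * (y - q0) / (1 - e)\<^sup>2)) (at e)"
proof (rule has_field_derivative_transform_within_open)
  show "((\<lambda>e. z * (y - q1) / e - (1 - z) * (y - q0) / (1 - e) + (q1 - q0 - tau)) has_real_derivative
           - (z * (y - q1) / e\<^sup>2 + (1 - z) * (y - q0) / (1 - e)\<^sup>2)) (at e)"
    using assms by (auto intro!: derivative_eq_intros simp: power2_eq_square)
  show "e \<in> {0<..<1}" using assms by simp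
qed (auto simp: phiW_eq_fractions)

text \<open>Pointwise form of E (phi S) = - E (d phi): the remainder is a function of the
  covariates times the score.\<close>

lemma phiW_mult_score:
  assumes "z = 0 \<or> z = 1" and "e \<noteq> 0" and "e \<noteq> 1"
  shows "phiW tau y z e q1 q0 * (z / e - (1 - z) / (1 - e))
       = (q1 - q0 - tau) * (z / e - (1 - z) / (1 - e))
         + (z * (y - q1) / e\<^sup>2 + (1 - z) * (y - q0) / (1 - e)\<^sup>2)"
proof -
  have "1 - e \<noteq> 0" using assms(3) by simp
  with assms show ?thesis
    by (auto simp: phiW_eq_fractions power2_eq_square divide_simps) (simp_all add: algebra_simps)
qed

lemma deriv_comp_at_0:
  fixes g h :: "real \<Rightarrow> real"
  assumes "(g has_real_derivative g') (at (h 0))" and "h differentiable (at 0)"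
  shows "deriv (\<lambda>t. g (h t)) 0 = g' * deriv h 0"
proof -
  have "(h has_real_derivative deriv h 0) (at 0)"
    using assms(2) DERIV_deriv_iff_real_differentiable by blast
  from DERIV_chain2[OF assms(1) this] show ?thesis by (rule DERIV_imp_deriv)
qed

lemma borel_measurable_deriv_at_0:
  fixes h :: "'a \<Rightarrow> real \<Rightarrow> real"
  assumes "\<And>t. (\<lambda>p. h p t) \<in> borel_measurable N"
    and "\<And>p. p \<in> space N \<Longrightarrow> h p differentiable (at 0)"
  shows "(\<lambda>p. deriv (h p) 0) \<in> borel_measurable N"
proof (rule borel_measurable_LIMSEQ_real)
  let ?d = "\<lambda>n p. (h p (inverse (real (Suc n))) - h p 0) / inverse (real (Suc n))"
  show "?d n \<in> borel_measurable N" for n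
    using assms(1) by measurable
  fix p assume "p \<in> space N"
  then have "((\<lambda>t. (h p (0 + t) - h p 0) / t) \<longlongrightarrow> deriv (h p) 0) (at 0)"
    using assms(2) DERIV_deriv_iff_real_differentiable DERIV_def by blast
  moreover have "filterlim (\<lambda>n. inverse (real (Suc n))) (at 0) sequentially"
    by (rule filterlim_atI[OF LIMSEQ_inverse_real_of_nat]) simp
  ultimately show "(\<lambda>n. ?d n p) \<longlonglongrightarrow> deriv (h p) 0"
    using filterlim_compose by fastforce
qed

section \<open>Treatment and W are conditionally independent given X\<close>

lemma (in finite_measure) distr_density_eq_of_rectangles:
  assumes [measurable]: "X \<in> measurable M MX" "W \<in> measurable M MW"
    "\<rho> \<in> borel_measurable M" "\<pi> \<in> borel_measurable M"
    and "AE \<omega> in M. 0 \<le> \<rho> \<omega>" and "AE \<omega> in M. 0 \<le> \<pi> \<omega>"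
    and "integrable M \<rho>" and "integrable M \<pi>"
    and rect: "\<And>A B. A \<in> sets MX \<Longrightarrow> B \<in> sets MW \<Longrightarrow>
      (\<integral>\<omega>. \<rho> \<omega> * (indicator A (X \<omega>) * indicator B (W \<omega>)) \<partial>M)
       = (\<integral>\<omega>. \<pi> \<omega> * (indicator A (X \<omega>) * indicator B (W \<omega>)) \<partial>M)"
  shows "distr (density M \<rho>) (MX \<Otimes>\<^sub>M MW) (\<lambda>\<omega>. (X \<omega>, W \<omega>))
       = distr (density M \<pi>) (MX \<Otimes>\<^sub>M MW) (\<lambda>\<omega>. (X \<omega>, W \<omega>))"
proof -
  have rectangle: "emeasure (distr (density M f) (MX \<Otimes>\<^sub>M MW) (\<lambda>\<omega>. (X \<omega>, W \<omega>))) (A \<times> B)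
      = ennreal (\<integral>\<omega>. f \<omega> * (indicator A (X \<omega>) * indicator B (W \<omega>)) \<partial>M)"
    if [measurable]: "A \<in> sets MX" "B \<in> sets MW" "f \<in> borel_measurable M"
      and "AE \<omega> in M. 0 \<le> f \<omega>" and "integrable M f" for f A B
  proof -
    have "emeasure (distr (density M f) (MX \<Otimes>\<^sub>M MW) (\<lambda>\<omega>. (X \<omega>, W \<omega>))) (A \<times> B)
        = (\<integral>\<^sup>+\<omega>. ennreal (f \<omega> * (indicator A (X \<omega>) * indicator B (W \<omega>))) \<partial>M)"
      by (auto simp: emeasure_distr emeasure_density indicator_def intro!: nn_integral_cong)
    also have "\<dots> = ennreal (\<integral>\<omega>. f \<omega> * (indicator A (X \<omega>) * indicator B (W \<omega>)) \<partial>M)"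
      using that
      by (intro nn_integral_eq_integral Bochner_Integration.integrable_bound[OF \<open>integrable M f\<close>])
        (auto simp: indicator_def elim!: eventually_mono)
    finally show ?thesis .
  qed
  show ?thesis
  proof (rule measure_eqI_generator_eq[OF Int_stable_pair_measure_generator[of MX MW]])
    show "{a \<times> b | a b. a \<in> sets MX \<and> b \<in> sets MW} \<subseteq> Pow (space MX \<times> space MW)"
      using sets.space_closed[of MX] sets.space_closed[of MW] by auto
    show "range (\<lambda>i::nat. space MX \<times> space MW) \<subseteq> {a \<times> b | a b. a \<in> sets MX \<and> b \<in> sets MW}"
      by auto
    show "emeasure (distr (density M \<rho>) (MX \<Otimes>\<^sub>M MW) (\<lambda>\<omega>. (X \<omega>, W \<omega>))) (space MX \<times> space MW) \<noteq> \<infinity>"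
      using assms by (subst rectangle) auto
  next
    fix S assume "S \<in> {a \<times> b | a b. a \<in> sets MX \<and> b \<in> sets MW}"
    then obtain A B where "S = A \<times> B" and "A \<in> sets MX" and "B \<in> sets MW" by auto
    then show "emeasure (distr (density M \<rho>) (MX \<Otimes>\<^sub>M MW) (\<lambda>\<omega>. (X \<omega>, W \<omega>))) S
        = emeasure (distr (density M \<pi>) (MX \<Otimes>\<^sub>M MW) (\<lambda>\<omega>. (X \<omega>, W \<omega>))) S"
      using assms by (simp add: rectangle rect)
  qed (auto simp: sets_pair_measure)
qed

lemma weighted_integral_eq_of_distr_eq:
  assumes eq: "distr (density M \<rho>) (MX \<Otimes>\<^sub>M MW) (\<lambda>\<omega>. (X \<omega>, W \<omega>))
       = distr (density M \<pi>) (MX \<Otimes>\<^sub>M MW) (\<lambda>\<omega>. (X \<omega>, W \<omega>))"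
    and [measurable]: "X \<in> measurable M MX" "W \<in> measurable M MW"
      "\<rho> \<in> borel_measurable M" "\<pi> \<in> borel_measurable M" "k \<in> borel_measurable (MX \<Otimes>\<^sub>M MW)"
    and "AE \<omega> in M. 0 \<le> \<rho> \<omega>" and "AE \<omega> in M. 0 \<le> \<pi> \<omega>"
    and "integrable M (\<lambda>\<omega>. \<rho> \<omega> * k (X \<omega>, W \<omega>))"
  shows "integrable M (\<lambda>\<omega>. \<pi> \<omega> * k (X \<omega>, W \<omega>))"
    and "(\<integral>\<omega>. \<rho> \<omega> * k (X \<omega>, W \<omega>) \<partial>M) = (\<integral>\<omega>. \<pi> \<omega> * k (X \<omega>, W \<omega>) \<partial>M)"
proof -
  have "integrable (distr (density M f) (MX \<Otimes>\<^sub>M MW) (\<lambda>\<omega>. (X \<omega>, W \<omega>))) k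
      \<longleftrightarrow> integrable M (\<lambda>\<omega>. f \<omega> * k (X \<omega>, W \<omega>))"
    and "integral\<^sup>L (distr (density M f) (MX \<Otimes>\<^sub>M MW) (\<lambda>\<omega>. (X \<omega>, W \<omega>))) k
      = (\<integral>\<omega>. f \<omega> * k (X \<omega>, W \<omega>) \<partial>M)"
    if [measurable]: "f \<in> borel_measurable M" and "AE \<omega> in M. 0 \<le> f \<omega>" for f
    using that by (simp_all add: integrable_distr_eq integrable_density integral_distr integral_density)
  from this[of \<rho>] this[of \<pi>] eq assms show
    "integrable M (\<lambda>\<omega>. \<pi> \<omega> * k (X \<omega>, W \<omega>))"
    "(\<integral>\<omega>. \<rho> \<omega> * k (X \<omega>, W \<omega>) \<partial>M) = (\<integral>\<omega>. \<pi> \<omega> * k (X \<omega>, W \<omega>) \<partial>M)"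
    by simp_all
qed

lemma cond_indep_vimage_fst:
  assumes "cond_indep M F A (sets (vimage_algebra (space M) (\<lambda>\<omega>. (f \<omega>, g \<omega>)) (N \<Otimes>\<^sub>M N')))"
    and "g \<in> space M \<rightarrow> space N'"
  shows "cond_indep M F A (sets (vimage_algebra (space M) f N))"
proof -
  have "sets (vimage_algebra (space M) f N)
      \<subseteq> sets (vimage_algebra (space M) (\<lambda>\<omega>. (f \<omega>, g \<omega>)) (N \<Otimes>\<^sub>M N'))"
  proof (rule sets_image_in_sets'[OF sets_vimage_algebra_space])
    fix B assume "B \<in> sets N"
    then have "(\<lambda>\<omega>. (f \<omega>, g \<omega>)) -` (B \<times> space N') \<inter> space M
        \<in> sets (vimage_algebra (space M) (\<lambda>\<omega>. (f \<omega>, g \<omega>)) (N \<Otimes>\<^sub>M N'))"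
      by (intro in_vimage_algebra) simp
    also have "(\<lambda>\<omega>. (f \<omega>, g \<omega>)) -` (B \<times> space N') \<inter> space M = f -` B \<inter> space M"
      using assms(2) by auto
    finally show "f -` B \<inter> space M
        \<in> sets (vimage_algebra (space M) (\<lambda>\<omega>. (f \<omega>, g \<omega>)) (N \<Otimes>\<^sub>M N'))" .
  qed
  with assms(1) show ?thesis
    by (auto simp: cond_indep_def)
qed

locale propensity_model =
  fixes M :: "'o measure" and MX :: "'x measure" and MW :: "'w measure"
    and Z :: "'o \<Rightarrow> real" and X :: "'o \<Rightarrow> 'x" and W :: "'o \<Rightarrow> 'w"
  assumes prob_space: "prob_space M"
    and measurable_X [measurable]: "X \<in> measurable M MX"
    and measurable_W [measurable]: "W \<in> measurable M MW"
    and measurable_Z [measurable]: "Z \<in> borel_measurable M"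
    and binary: "\<forall>\<omega>\<in>space M. Z \<omega> \<in> {0, 1}"
    \<comment> \<open>the only consequence of Assumption 2 that is needed\<close>
    and Z_indep_W: "cond_indep M (sigX M X MX) (sets (vimage_algebra (space M) Z borel))
                      (sets (vimage_algebra (space M) W MW))"
    and overlap: "AE \<omega> in M. 0 < e0 M X MX Z \<omega> \<and> e0 M X MX Z \<omega> < 1"
begin

sublocale prob_space M
  by (rule prob_space)

abbreviation ps :: "'o \<Rightarrow> real" where
  "ps \<equiv> e0 M X MX Z"

lemma sigma_finite_subalgebra_sigX: "sigma_finite_subalgebra M (sigX M X MX)"
proof -
  have "subalgebra M (sigX M X MX)"
    unfolding subalgebra_def sigX_def using sets_image_in_sets[OF refl measurable_X] by simp
  then show ?thesis
    by (intro finite_measure_subalgebra_is_sigma_finite)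
      (simp add: finite_measure_subalgebra_def finite_measure_subalgebra_axioms_def
        finite_measure_axioms)
qed

sublocale given_X: sigma_finite_subalgebra M "sigX M X MX"
  by (rule sigma_finite_subalgebra_sigX)

lemma measurable_X_sigX [measurable]: "X \<in> measurable (sigX M X MX) MX"
  unfolding sigX_def by (rule measurable_vimage_algebra1) (use measurable_space[OF measurable_X] in auto)

lemma measurable_ps [measurable]:
  "ps \<in> borel_measurable M" "ps \<in> borel_measurable (sigX M X MX)"
  unfolding e0_def by auto

lemma integrable_ps: "integrable M ps"
  unfolding e0_def
  by (intro given_X.real_cond_exp_int integrable_real_indicator) (auto simp: less_top[symmetric])

lemma nonneg_treatment: "AE \<omega> in M. 0 \<le> Z \<omega>" "AE \<omega> in M. 0 \<le> 1 - Z \<omega>"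
  using binary by (auto intro!: AE_I2)

lemma nonneg_ps: "AE \<omega> in M. 0 \<le> ps \<omega>" "AE \<omega> in M. 0 \<le> 1 - ps \<omega>"
  by (auto intro: eventually_mono[OF overlap])

lemma integral_treated_rectangle:
  assumes [measurable]: "A \<in> sets MX" "B \<in> sets MW"
  shows "(\<integral>\<omega>. Z \<omega> * (indicator A (X \<omega>) * indicator B (W \<omega>)) \<partial>M)
       = (\<integral>\<omega>. ps \<omega> * (indicator A (X \<omega>) * indicator B (W \<omega>)) \<partial>M)"
proof -
  define a where "a = {\<omega> \<in> space M. Z \<omega> = 1}"
  define b where "b = W -` B \<inter> space M"
  have [measurable]: "a \<in> sets M" "b \<in> sets M"
    by (simp_all add: a_def b_def)
  have b_W: "b \<in> sets (vimage_algebra (space M) W MW)"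
    by (auto simp: b_def intro: in_vimage_algebra)
  have "a = Z -` {1} \<inter> space M"
    by (auto simp: a_def)
  then have "a \<in> sets (vimage_algebra (space M) Z borel)"
    by (auto intro: in_vimage_algebra)
  then have indep: "AE \<omega> in M. real_cond_exp M (sigX M X MX) (indicator (a \<inter> b)) \<omega>
      = ps \<omega> * real_cond_exp M (sigX M X MX) (indicator b) \<omega>"
    using Z_indep_W b_W unfolding cond_indep_def e0_def a_def by blast
  have "(\<integral>\<omega>. Z \<omega> * (indicator A (X \<omega>) * indicator B (W \<omega>)) \<partial>M)
      = (\<integral>\<omega>. indicator A (X \<omega>) * indicator (a \<inter> b) \<omega> \<partial>M)"
    using binary by (intro Bochner_Integration.integral_cong) (auto simp: a_def b_def indicator_def)
  also have "\<dots> = (\<integral>\<omega>. indicator A (X \<omega>) * real_cond_exp M (sigX M X MX) (indicator (a \<inter> b)) \<omega> \<partial>M)"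
    by (rule given_X.real_cond_exp_intg(2)[symmetric])
      (auto intro!: Bochner_Integration.integrable_bound[of _ "\<lambda>_. 1::real"] simp: indicator_def)
  also have "\<dots> = (\<integral>\<omega>. (indicator A (X \<omega>) * ps \<omega>) * real_cond_exp M (sigX M X MX) (indicator b) \<omega> \<partial>M)"
    using indep by (intro integral_cong_AE) (auto elim!: eventually_mono)
  also have "\<dots> = (\<integral>\<omega>. (indicator A (X \<omega>) * ps \<omega>) * indicator b \<omega> \<partial>M)"
    by (rule given_X.real_cond_exp_intg(2))
      (auto intro!: Bochner_Integration.integrable_bound[OF integrable_ps] simp: indicator_def)
  also have "\<dots> = (\<integral>\<omega>. ps \<omega> * (indicator A (X \<omega>) * indicator B (W \<omega>)) \<partial>M)"
    by (intro Bochner_Integration.integral_cong) (auto simp: b_def indicator_def)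
  finally show ?thesis .
qed

lemma integral_control_rectangle:
  assumes [measurable]: "A \<in> sets MX" "B \<in> sets MW"
  shows "(\<integral>\<omega>. (1 - Z \<omega>) * (indicator A (X \<omega>) * indicator B (W \<omega>)) \<partial>M)
       = (\<integral>\<omega>. (1 - ps \<omega>) * (indicator A (X \<omega>) * indicator B (W \<omega>)) \<partial>M)"
proof -
  let ?AB = "\<lambda>\<omega>. indicator A (X \<omega>) * indicator B (W \<omega>) :: real"
  have "integrable M ?AB" and "integrable M (\<lambda>\<omega>. Z \<omega> * ?AB \<omega>)"
    using binary
    by (auto intro!: Bochner_Integration.integrable_bound[of _ "\<lambda>_. 1::real"] AE_I2
        simp: indicator_def)
  moreover have "integrable M (\<lambda>\<omega>. ps \<omega> * ?AB \<omega>)"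
    by (rule Bochner_Integration.integrable_bound[OF integrable_ps]) (auto simp: indicator_def)
  ultimately show ?thesis
    using integral_treated_rectangle[OF assms] by (simp add: left_diff_distrib)
qed

lemma integral_treated_eq_propensity:
  assumes [measurable]: "k \<in> borel_measurable (MX \<Otimes>\<^sub>M MW)"
    and "integrable M (\<lambda>\<omega>. Z \<omega> * k (X \<omega>, W \<omega>))"
  shows "integrable M (\<lambda>\<omega>. ps \<omega> * k (X \<omega>, W \<omega>))"
    and "(\<integral>\<omega>. Z \<omega> * k (X \<omega>, W \<omega>) \<partial>M) = (\<integral>\<omega>. ps \<omega> * k (X \<omega>, W \<omega>) \<partial>M)"
proof -
  have "integrable M Z"
    using binary by (auto intro!: Bochner_Integration.integrable_bound[of _ "\<lambda>_. 1::real"] AE_I2)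
  then have "distr (density M Z) (MX \<Otimes>\<^sub>M MW) (\<lambda>\<omega>. (X \<omega>, W \<omega>))
      = distr (density M ps) (MX \<Otimes>\<^sub>M MW) (\<lambda>\<omega>. (X \<omega>, W \<omega>))"
    by (intro distr_density_eq_of_rectangles integral_treated_rectangle)
      (use nonneg_treatment nonneg_ps integrable_ps in simp_all)
  from weighted_integral_eq_of_distr_eq[OF this] assms show
    "integrable M (\<lambda>\<omega>. ps \<omega> * k (X \<omega>, W \<omega>))"
    "(\<integral>\<omega>. Z \<omega> * k (X \<omega>, W \<omega>) \<partial>M) = (\<integral>\<omega>. ps \<omega> * k (X \<omega>, W \<omega>) \<partial>M)"
    using nonneg_treatment nonneg_ps by simp_all
qed

lemma integral_control_eq_propensity:
  assumes [measurable]: "k \<in> borel_measurable (MX \<Otimes>\<^sub>M MW)"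
    and "integrable M (\<lambda>\<omega>. (1 - Z \<omega>) * k (X \<omega>, W \<omega>))"
  shows "integrable M (\<lambda>\<omega>. (1 - ps \<omega>) * k (X \<omega>, W \<omega>))"
    and "(\<integral>\<omega>. (1 - Z \<omega>) * k (X \<omega>, W \<omega>) \<partial>M) = (\<integral>\<omega>. (1 - ps \<omega>) * k (X \<omega>, W \<omega>) \<partial>M)"
proof -
  have "integrable M (\<lambda>\<omega>. 1 - Z \<omega>)"
    using binary by (auto intro!: Bochner_Integration.integrable_bound[of _ "\<lambda>_. 1::real"] AE_I2)
  then have "distr (density M (\<lambda>\<omega>. 1 - Z \<omega>)) (MX \<Otimes>\<^sub>M MW) (\<lambda>\<omega>. (X \<omega>, W \<omega>))
      = distr (density M (\<lambda>\<omega>. 1 - ps \<omega>)) (MX \<Otimes>\<^sub>M MW) (\<lambda>\<omega>. (X \<omega>, W \<omega>))"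
    by (intro distr_density_eq_of_rectangles integral_control_rectangle)
      (use nonneg_treatment nonneg_ps integrable_ps in simp_all)
  from weighted_integral_eq_of_distr_eq[OF this] assms show
    "integrable M (\<lambda>\<omega>. (1 - ps \<omega>) * k (X \<omega>, W \<omega>))"
    "(\<integral>\<omega>. (1 - Z \<omega>) * k (X \<omega>, W \<omega>) \<partial>M) = (\<integral>\<omega>. (1 - ps \<omega>) * k (X \<omega>, W \<omega>) \<partial>M)"
    using nonneg_treatment nonneg_ps by simp_all
qed

end

section \<open>Score identities along a path of propensity models\<close>

locale propensity_path = propensity_model M MX MW Z X W
  for M :: "'o measure" and MX :: "'x measure" and MW :: "'w measure"
    and Z :: "'o \<Rightarrow> real" and X :: "'o \<Rightarrow> 'x" and W :: "'o \<Rightarrow> 'w" +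
  fixes h :: "'x \<Rightarrow> 'w \<Rightarrow> real \<Rightarrow> real"
  assumes measurable_path: "\<And>t. (\<lambda>(x, w). h x w t) \<in> borel_measurable (MX \<Otimes>\<^sub>M MW)"
    and differentiable_path: "\<And>x w. x \<in> space MX \<Longrightarrow> w \<in> space MW \<Longrightarrow> h x w differentiable (at 0)"
    and path_at_0: "AE \<omega> in M. h (X \<omega>) (W \<omega>) 0 = ps \<omega>"
begin

definition score :: "'o \<Rightarrow> real" where
  "score \<omega> = deriv (\<lambda>t. loglik (Z \<omega>) (h (X \<omega>) (W \<omega>) t)) 0"

definition base :: "'x \<times> 'w \<Rightarrow> real" where
  "base p = h (fst p) (snd p) 0"

definition velocity :: "'x \<times> 'w \<Rightarrow> real" where
  "velocity p = deriv (h (fst p) (snd p)) 0"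

lemma measurable_base [measurable]: "base \<in> borel_measurable (MX \<Otimes>\<^sub>M MW)"
  using measurable_path[of 0] unfolding base_def[abs_def] by (simp add: split_beta')

lemma measurable_velocity [measurable]: "velocity \<in> borel_measurable (MX \<Otimes>\<^sub>M MW)"
  unfolding velocity_def
  by (rule borel_measurable_deriv_at_0)
    (use measurable_path differentiable_path in \<open>auto simp: split_beta' space_pair_measure\<close>)

lemma AE_base: "AE \<omega> in M. \<omega> \<in> space M \<and> base (X \<omega>, W \<omega>) = ps \<omega> \<and> 0 < ps \<omega> \<and> ps \<omega> < 1"
  using path_at_0 overlap AE_space by eventually_elim (simp add: base_def)

lemma differentiable_path_at:
  "\<omega> \<in> space M \<Longrightarrow> h (X \<omega>) (W \<omega>) differentiable (at 0)"
  using differentiable_path measurable_space[OF measurable_X] measurable_space[OF measurable_W]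
  by blast

lemma score_eq:
  assumes "\<omega> \<in> space M" and "0 < base (X \<omega>, W \<omega>)" and "base (X \<omega>, W \<omega>) < 1"
  shows "score \<omega> = (Z \<omega> / base (X \<omega>, W \<omega>) - (1 - Z \<omega>) / (1 - base (X \<omega>, W \<omega>)))
                   * velocity (X \<omega>, W \<omega>)"
  using deriv_comp_at_0[OF has_real_derivative_loglik differentiable_path_at] assms
  by (simp add: score_def base_def velocity_def)

lemma integral_mult_score_eq_0:
  assumes [measurable]: "r \<in> borel_measurable (MX \<Otimes>\<^sub>M MW)"
    and rS: "integrable M (\<lambda>\<omega>. r (X \<omega>, W \<omega>) * score \<omega>)"
  shows "(\<integral>\<omega>. r (X \<omega>, W \<omega>) * score \<omega> \<partial>M) = 0"
proof -
  \<comment> \<open>On Z = 1 the score is r v / e, on Z = 0 it is - r v / (1 - e); replacing Z by e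
    and 1 - Z by 1 - e makes the two pieces cancel.\<close>
  define k1 where "k1 p = r p * velocity p / base p" for p
  define k0 where "k0 p = - r p * velocity p / (1 - base p)" for p
  have [measurable]: "k1 \<in> borel_measurable (MX \<Otimes>\<^sub>M MW)" "k0 \<in> borel_measurable (MX \<Otimes>\<^sub>M MW)"
    unfolding k1_def[abs_def] k0_def[abs_def] by measurable
  have [measurable]: "(\<lambda>\<omega>. r (X \<omega>, W \<omega>) * score \<omega>) \<in> borel_measurable M"
    using rS by (rule borel_measurable_integrable)
  have "AE \<omega> in M. (r (X \<omega>, W \<omega>) * score \<omega> = Z \<omega> * k1 (X \<omega>, W \<omega>) + (1 - Z \<omega>) * k0 (X \<omega>, W \<omega>))
      \<and> (Z \<omega> * (r (X \<omega>, W \<omega>) * score \<omega>) = Z \<omega> * k1 (X \<omega>, W \<omega>))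
      \<and> ((1 - Z \<omega>) * (r (X \<omega>, W \<omega>) * score \<omega>) = (1 - Z \<omega>) * k0 (X \<omega>, W \<omega>))
      \<and> (ps \<omega> * k1 (X \<omega>, W \<omega>) + (1 - ps \<omega>) * k0 (X \<omega>, W \<omega>) = 0)"
    using AE_base by eventually_elim (use binary in \<open>auto simp: score_eq k1_def k0_def\<close>)
  then have decompose: "AE \<omega> in M. r (X \<omega>, W \<omega>) * score \<omega> = Z \<omega> * k1 (X \<omega>, W \<omega>) + (1 - Z \<omega>) * k0 (X \<omega>, W \<omega>)"
    and treated: "AE \<omega> in M. Z \<omega> * (r (X \<omega>, W \<omega>) * score \<omega>) = Z \<omega> * k1 (X \<omega>, W \<omega>)"
    and control: "AE \<omega> in M. (1 - Z \<omega>) * (r (X \<omega>, W \<omega>) * score \<omega>) = (1 - Z \<omega>) * k0 (X \<omega>, W \<omega>)"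
    and balance: "AE \<omega> in M. ps \<omega> * k1 (X \<omega>, W \<omega>) + (1 - ps \<omega>) * k0 (X \<omega>, W \<omega>) = 0"
    by (rule eventually_mono; blast)+
  have "integrable M (\<lambda>\<omega>. Z \<omega> * (r (X \<omega>, W \<omega>) * score \<omega>))"
    using binary by (auto intro!: Bochner_Integration.integrable_bound[OF rS] AE_I2 simp: abs_mult)
  then have int1: "integrable M (\<lambda>\<omega>. Z \<omega> * k1 (X \<omega>, W \<omega>))"
    by (rule integrable_cong_AE_imp) (measurable, fact treated)
  have "integrable M (\<lambda>\<omega>. (1 - Z \<omega>) * (r (X \<omega>, W \<omega>) * score \<omega>))"
    using binary by (auto intro!: Bochner_Integration.integrable_bound[OF rS] AE_I2 simp: abs_mult)
  then have int0: "integrable M (\<lambda>\<omega>. (1 - Z \<omega>) * k0 (X \<omega>, W \<omega>))"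
    by (rule integrable_cong_AE_imp) (measurable, fact control)
  have "(\<integral>\<omega>. r (X \<omega>, W \<omega>) * score \<omega> \<partial>M)
      = (\<integral>\<omega>. Z \<omega> * k1 (X \<omega>, W \<omega>) + (1 - Z \<omega>) * k0 (X \<omega>, W \<omega>) \<partial>M)"
    using decompose by (intro integral_cong_AE) measurable
  also have "\<dots> = (\<integral>\<omega>. ps \<omega> * k1 (X \<omega>, W \<omega>) \<partial>M) + (\<integral>\<omega>. (1 - ps \<omega>) * k0 (X \<omega>, W \<omega>) \<partial>M)"
    using int1 int0 integral_treated_eq_propensity(2)[OF _ int1] integral_control_eq_propensity(2)[OF _ int0]
    by simp
  also have "\<dots> = (\<integral>\<omega>. ps \<omega> * k1 (X \<omega>, W \<omega>) + (1 - ps \<omega>) * k0 (X \<omega>, W \<omega>) \<partial>M)"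
    using integral_treated_eq_propensity(1)[OF _ int1] integral_control_eq_propensity(1)[OF _ int0]
    by simp
  also have "\<dots> = 0"
    using balance by (rule integral_eq_zero_AE)
  finally show ?thesis .
qed

lemma integral_score_eq_0:
  assumes "integrable M score"
  shows "(\<integral>\<omega>. score \<omega> \<partial>M) = 0"
  using integral_mult_score_eq_0[of "\<lambda>_. 1"] assms by simp

lemma integral_phiW_mult_score:
  fixes tau :: real and y :: "'o \<Rightarrow> real" and q1 q0 :: "'x \<times> 'w \<Rightarrow> real"
  defines "\<phi> \<equiv> \<lambda>\<omega> t. phiW tau (y \<omega>) (Z \<omega>) (h (X \<omega>) (W \<omega>) t) (q1 (X \<omega>, W \<omega>)) (q0 (X \<omega>, W \<omega>))"
  assumes [measurable]: "q1 \<in> borel_measurable (MX \<Otimes>\<^sub>M MW)" "q0 \<in> borel_measurable (MX \<Otimes>\<^sub>M MW)"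
      "score \<in> borel_measurable M"
    and int_\<phi>: "integrable M (\<lambda>\<omega>. \<phi> \<omega> 0 * score \<omega>)"
    and int_deriv: "integrable M (\<lambda>\<omega>. deriv (\<phi> \<omega>) 0)"
  shows "(\<integral>\<omega>. \<phi> \<omega> 0 * score \<omega> \<partial>M) = - (\<integral>\<omega>. deriv (\<phi> \<omega>) 0 \<partial>M)"
proof -
  define r where "r p = q1 p - q0 p - tau" for p
  have [measurable]: "r \<in> borel_measurable (MX \<Otimes>\<^sub>M MW)"
    unfolding r_def[abs_def] by measurable
  have [measurable]: "(\<lambda>\<omega>. \<phi> \<omega> 0 * score \<omega>) \<in> borel_measurable M"
    "(\<lambda>\<omega>. deriv (\<phi> \<omega>) 0) \<in> borel_measurable M"
    using int_\<phi> int_deriv by auto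
  have "AE \<omega> in M. r (X \<omega>, W \<omega>) * score \<omega> = \<phi> \<omega> 0 * score \<omega> + deriv (\<phi> \<omega>) 0"
    using AE_base
  proof eventually_elim
    case (elim \<omega>)
    define e where "e = h (X \<omega>) (W \<omega>) 0"
    define s where "s = Z \<omega> / e - (1 - Z \<omega>) / (1 - e)"
    define A where "A = Z \<omega> * (y \<omega> - q1 (X \<omega>, W \<omega>)) / e\<^sup>2 + (1 - Z \<omega>) * (y \<omega> - q0 (X \<omega>, W \<omega>)) / (1 - e)\<^sup>2"
    have e: "0 < e" "e < 1" and Z: "Z \<omega> = 0 \<or> Z \<omega> = 1"
      using elim binary by (auto simp: e_def base_def)
    have score: "score \<omega> = s * velocity (X \<omega>, W \<omega>)"
      using elim e by (simp add: score_eq s_def e_def base_def)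
    have deriv: "deriv (\<phi> \<omega>) 0 = - A * velocity (X \<omega>, W \<omega>)"
      using deriv_comp_at_0[OF has_real_derivative_phiW[OF e, unfolded e_def]
          differentiable_path_at[OF conjunct1[OF elim]]]
      by (simp add: \<phi>_def A_def e_def velocity_def)
    have "\<phi> \<omega> 0 * s = r (X \<omega>, W \<omega>) * s + A"
      using phiW_mult_score[OF Z] e by (simp add: \<phi>_def r_def s_def A_def e_def)
    then have "r (X \<omega>, W \<omega>) * s * velocity (X \<omega>, W \<omega>)
        = \<phi> \<omega> 0 * s * velocity (X \<omega>, W \<omega>) - A * velocity (X \<omega>, W \<omega>)"
      by (simp add: algebra_simps)
    then show ?case
      unfolding score deriv by (simp add: mult.assoc)
  qed
  note decompose = this
  have rS: "integrable M (\<lambda>\<omega>. r (X \<omega>, W \<omega>) * score \<omega>)"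
    by (rule integrable_cong_AE_imp[OF Bochner_Integration.integrable_add[OF int_\<phi> int_deriv]])
      (measurable, use decompose in \<open>auto elim: eventually_mono\<close>)
  then have "(\<integral>\<omega>. r (X \<omega>, W \<omega>) * score \<omega> \<partial>M) = (\<integral>\<omega>. \<phi> \<omega> 0 * score \<omega> + deriv (\<phi> \<omega>) 0 \<partial>M)"
    using decompose by (intro integral_cong_AE) auto
  with integral_mult_score_eq_0[OF _ rS] int_\<phi> int_deriv show ?thesis
    by simp
qed

end

context propensity_model
begin

lemma phiRV_curve_moments:
  fixes eW :: "'x \<Rightarrow> 'w \<Rightarrow> real^'a \<Rightarrow> real^'g \<Rightarrow> real" and QW :: "'x \<Rightarrow> 'w \<Rightarrow> real \<Rightarrow> 'd \<Rightarrow> real"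
    and A :: "real \<Rightarrow> real^'a" and G :: "real \<Rightarrow> real^'g"
    and Y0 Y1 :: "'o \<Rightarrow> real" and \<delta> :: 'd
  defines "\<phi> \<equiv> phiRV M Y0 Y1 Z X W eW QW \<delta>"
    and "S \<equiv> \<lambda>\<omega>. deriv (\<lambda>t. loglik (Z \<omega>) (eW (X \<omega>) (W \<omega>) (A t) (G t))) 0"
  assumes "\<And>a g. (\<lambda>(x, w). eW x w a g) \<in> borel_measurable (MX \<Otimes>\<^sub>M MW)"
    and QW: "\<And>z. (\<lambda>(x, w). QW x w z \<delta>) \<in> borel_measurable (MX \<Otimes>\<^sub>M MW)"
    and "AE \<omega> in M. eW (X \<omega>) (W \<omega>) (A 0) (G 0) = ps \<omega>"
    and "\<And>x w. x \<in> space MX \<Longrightarrow> w \<in> space MW \<Longrightarrow> (\<lambda>t. eW x w (A t) (G t)) differentiable (at 0)"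
    and sq_\<phi>: "sqint M (\<phi> (A 0) (G 0))" and sq_S: "sqint M S"
    and int_deriv: "integrable M (\<lambda>\<omega>. deriv (\<lambda>t. \<phi> (A t) (G t) \<omega>) 0)"
  shows "(\<integral>\<omega>. S \<omega> \<partial>M) = 0"
    and "(\<integral>\<omega>. \<phi> (A 0) (G 0) \<omega> * S \<omega> \<partial>M) = - (\<integral>\<omega>. deriv (\<lambda>t. \<phi> (A t) (G t) \<omega>) 0 \<partial>M)"
proof -
  interpret propensity_path M MX MW Z X W "\<lambda>x w t. eW x w (A t) (G t)"
    by unfold_locales (use assms in auto)
  have S: "S = score"
    by (simp add: S_def score_def fun_eq_iff)
  have q: "(\<lambda>p. QW (fst p) (snd p) z \<delta>) \<in> borel_measurable (MX \<Otimes>\<^sub>M MW)" for z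
    using QW[of z] by (simp add: split_beta')
  show "(\<integral>\<omega>. S \<omega> \<partial>M) = 0"
    using integral_score_eq_0 integrable_sqint[OF sq_S] by (simp add: S)
  show "(\<integral>\<omega>. \<phi> (A 0) (G 0) \<omega> * S \<omega> \<partial>M) = - (\<integral>\<omega>. deriv (\<lambda>t. \<phi> (A t) (G t) \<omega>) 0 \<partial>M)"
    using integral_phiW_mult_score[OF q q, of "ate M Y0 Y1" "obsY Y0 Y1 Z"]
      integrable_mult_sqint[OF sq_\<phi> sq_S] sq_S int_deriv
    by (simp add: S \<phi>_def phiRV_def sqint_def)
qed


lemma scoreA_moments:
  fixes eW :: "'x \<Rightarrow> 'w \<Rightarrow> real^'a \<Rightarrow> real^'g \<Rightarrow> real" and QW :: "'x \<Rightarrow> 'w \<Rightarrow> real \<Rightarrow> 'd \<Rightarrow> real"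
    and Y0 Y1 :: "'o \<Rightarrow> real" and \<delta> :: 'd
  defines "\<phi> \<equiv> phiRV M Y0 Y1 Z X W eW QW \<delta>"
  assumes "\<And>a g. (\<lambda>(x, w). eW x w a g) \<in> borel_measurable (MX \<Otimes>\<^sub>M MW)"
    and "\<And>z. (\<lambda>(x, w). QW x w z \<delta>) \<in> borel_measurable (MX \<Otimes>\<^sub>M MW)"
    and "AE \<omega> in M. eW (X \<omega>) (W \<omega>) \<alpha>0 0 = ps \<omega>"
    and "\<And>x w. x \<in> space MX \<Longrightarrow> w \<in> space MW \<Longrightarrow>
           (\<lambda>t. eW x w (\<alpha>0 + t *\<^sub>R axis i 1) 0) differentiable (at 0)"
    and "sqint M (\<phi> \<alpha>0 0)" and "sqint M (\<lambda>\<omega>. scoreA Z X W eW \<alpha>0 \<omega> $ i)"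
    and "integrable M (\<lambda>\<omega>. pgrad (\<lambda>a. \<phi> a 0 \<omega>) \<alpha>0 $ i)"
  shows "(\<integral>\<omega>. scoreA Z X W eW \<alpha>0 \<omega> $ i \<partial>M) = 0"
    and "(\<integral>\<omega>. \<phi> \<alpha>0 0 \<omega> * scoreA Z X W eW \<alpha>0 \<omega> $ i \<partial>M)
         = (- vexp M (\<lambda>\<omega>. pgrad (\<lambda>a. \<phi> a 0 \<omega>) \<alpha>0)) $ i"
  using assms(4,6-8) phiRV_curve_moments[where A = "\<lambda>t. \<alpha>0 + t *\<^sub>R axis i 1" and G = "\<lambda>_. 0" and eW = eW and QW = QW and ?Y0.0 = Y0 and ?Y1.0 = Y1,
      OF assms(2,3) _ assms(5)]
  by (simp_all add: scoreA_def pgrad_def vexp_def \<phi>_def)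

lemma scoreG_moments:
  fixes eW :: "'x \<Rightarrow> 'w \<Rightarrow> real^'a \<Rightarrow> real^'g \<Rightarrow> real" and QW :: "'x \<Rightarrow> 'w \<Rightarrow> real \<Rightarrow> 'd \<Rightarrow> real"
    and Y0 Y1 :: "'o \<Rightarrow> real" and \<delta> :: 'd
  defines "\<phi> \<equiv> phiRV M Y0 Y1 Z X W eW QW \<delta>"
  assumes "\<And>a g. (\<lambda>(x, w). eW x w a g) \<in> borel_measurable (MX \<Otimes>\<^sub>M MW)"
    and "\<And>z. (\<lambda>(x, w). QW x w z \<delta>) \<in> borel_measurable (MX \<Otimes>\<^sub>M MW)"
    and "AE \<omega> in M. eW (X \<omega>) (W \<omega>) \<alpha>0 0 = ps \<omega>"
    and "\<And>x w. x \<in> space MX \<Longrightarrow> w \<in> space MW \<Longrightarrow>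
           (\<lambda>t. eW x w \<alpha>0 (0 + t *\<^sub>R axis k 1)) differentiable (at 0)"
    and "sqint M (\<phi> \<alpha>0 0)" and "sqint M (\<lambda>\<omega>. scoreG Z X W eW \<alpha>0 \<omega> $ k)"
    and "integrable M (\<lambda>\<omega>. pgrad (\<lambda>g. \<phi> \<alpha>0 g \<omega>) 0 $ k)"
  shows "(\<integral>\<omega>. scoreG Z X W eW \<alpha>0 \<omega> $ k \<partial>M) = 0"
    and "(\<integral>\<omega>. \<phi> \<alpha>0 0 \<omega> * scoreG Z X W eW \<alpha>0 \<omega> $ k \<partial>M)
         = (- vexp M (\<lambda>\<omega>. pgrad (\<lambda>g. \<phi> \<alpha>0 g \<omega>) 0)) $ k"
  using assms(4,6-8) phiRV_curve_moments[where A = "\<lambda>_. \<alpha>0" and G = "\<lambda>t. 0 + t *\<^sub>R axis k 1" and eW = eW and QW = QW and ?Y0.0 = Y0 and ?Y1.0 = Y1,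
      OF assms(2,3) _ assms(5)]
  by (simp_all add: scoreG_def pgrad_def vexp_def \<phi>_def)
end

theorem lemmaS5:
  fixes M :: "'o measure" and MX :: "'x measure" and MW :: "'w measure"
    and Y0 Y1 Z :: "'o \<Rightarrow> real" and X :: "'o \<Rightarrow> 'x" and W :: "'o \<Rightarrow> 'w"
    and eX :: "'x \<Rightarrow> real^'a \<Rightarrow> real"
    and eW :: "'x \<Rightarrow> 'w \<Rightarrow> real^'a \<Rightarrow> real^'g \<Rightarrow> real"
    and QW :: "'x \<Rightarrow> 'w \<Rightarrow> real \<Rightarrow> 'd \<Rightarrow> real"
    and \<alpha>0 :: "real^'a" and \<delta> :: 'd
  assumes prob: "prob_space M"
    and meas_X: "X \<in> measurable M MX" and meas_W: "W \<in> measurable M MW"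
    and meas_Z: "Z \<in> borel_measurable M" and binary: "\<forall>\<omega>\<in>space M. Z \<omega> \<in> {0, 1}"
    and sq_Y0: "sqint M Y0" and sq_Y1: "sqint M Y1"
    and meas_eX: "\<And>a. (\<lambda>x. eX x a) \<in> borel_measurable MX"
    and meas_eW: "\<And>a g. (\<lambda>(x, w). eW x w a g) \<in> borel_measurable (MX \<Otimes>\<^sub>M MW)"
    and meas_QW: "\<And>z. (\<lambda>(x, w). QW x w z \<delta>) \<in> borel_measurable (MX \<Otimes>\<^sub>M MW)"
    and nested: "\<And>x w a. eW x w a 0 = eX x a"
    \<comment> \<open>Assumption 1\<close>
    and A1_indep: "cond_indep M (sigX M X MX) (sets (vimage_algebra (space M) Z borel))
                     (sets (vimage_algebra (space M) (\<lambda>\<omega>. (Y0 \<omega>, Y1 \<omega>)) borel))"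
    and A1_overlap: "AE \<omega> in M. 0 < e0 M X MX Z \<omega> \<and> e0 M X MX Z \<omega> < 1"
    \<comment> \<open>Assumption 2\<close>
    and A2: "cond_indep M (sigX M X MX) (sets (vimage_algebra (space M) Z borel))
               (sets (vimage_algebra (space M) (\<lambda>\<omega>. (W \<omega>, Y0 \<omega>, Y1 \<omega>)) (MW \<Otimes>\<^sub>M borel)))"
    \<comment> \<open>correct specification of both propensity score models (gamma0 = 0)\<close>
    and correct: "AE \<omega> in M. eX (X \<omega>) \<alpha>0 = e0 M X MX Z \<omega>"
    \<comment> \<open>regularity: coordinatewise differentiability of e_W at (alpha0, 0)\<close>
    and diff_a: "\<And>x w i. x \<in> space MX \<Longrightarrow> w \<in> space MW \<Longrightarrow>
                   (\<lambda>t. eW x w (\<alpha>0 + t *\<^sub>R axis i 1) 0) differentiable (at 0)"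
    and diff_g: "\<And>x w k. x \<in> space MX \<Longrightarrow> w \<in> space MW \<Longrightarrow>
                   (\<lambda>t. eW x w \<alpha>0 (0 + t *\<^sub>R axis k 1)) differentiable (at 0)"
    \<comment> \<open>regularity: finite moments\<close>
    and sq_Q1: "sqint M (\<lambda>\<omega>. QW (X \<omega>) (W \<omega>) 1 \<delta>)"
    and sq_Q0: "sqint M (\<lambda>\<omega>. QW (X \<omega>) (W \<omega>) 0 \<delta>)"
    and sq_phi: "sqint M (phiRV M Y0 Y1 Z X W eW QW \<delta> \<alpha>0 0)"
    and sq_Sa: "\<And>i. sqint M (\<lambda>\<omega>. scoreA Z X W eW \<alpha>0 \<omega> $ i)"
    and sq_Sg: "\<And>k. sqint M (\<lambda>\<omega>. scoreG Z X W eW \<alpha>0 \<omega> $ k)"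
    and int_Da: "\<And>i. integrable M
                   (\<lambda>\<omega>. pgrad (\<lambda>a. phiRV M Y0 Y1 Z X W eW QW \<delta> a 0 \<omega>) \<alpha>0 $ i)"
    and int_Dg: "\<And>k. integrable M
                   (\<lambda>\<omega>. pgrad (\<lambda>g. phiRV M Y0 Y1 Z X W eW QW \<delta> \<alpha>0 g \<omega>) 0 $ k)"
    \<comment> \<open>the information matrix H_{W,0} is invertible\<close>
    and inv_HW: "invertible (Hmat M (\<lambda>\<omega>. stack (scoreA Z X W eW \<alpha>0 \<omega>) (scoreG Z X W eW \<alpha>0 \<omega>))
                                  (\<lambda>\<omega>. stack (scoreA Z X W eW \<alpha>0 \<omega>) (scoreG Z X W eW \<alpha>0 \<omega>)))"
  shows
    "let Sa = scoreA Z X W eW \<alpha>0; Sg = scoreG Z X W eW \<alpha>0;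
         S = (\<lambda>\<omega>. stack (Sa \<omega>) (Sg \<omega>));
         \<phi> = phiRV M Y0 Y1 Z X W eW QW \<delta>;
         Haa = Hmat M Sa Sa; Hag = Hmat M Sa Sg; Hga = Hmat M Sg Sa; Hgg = Hmat M Sg Sg;
         HW = Hmat M S S;
         D1 = - vexp M (\<lambda>\<omega>. pgrad (\<lambda>a. \<phi> a 0 \<omega>) \<alpha>0);
         D2 = - vexp M (\<lambda>\<omega>. pgrad (\<lambda>g. \<phi> \<alpha>0 g \<omega>) 0);
         DW = stack D1 D2;
         \<Sigma>fps = var M (\<phi> \<alpha>0 0);
         \<Sigma>eps = var M (\<lambda>\<omega>. \<phi> \<alpha>0 0 \<omega> - DW \<bullet> (matrix_inv HW *v S \<omega>));
         F = Hgg - Hga ** matrix_inv Haa ** Hag;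
         R = D2 - D1 v* (matrix_inv Haa ** Hag);
         MM = R \<bullet> (matrix_inv F *v R)
     in \<Sigma>eps = \<Sigma>fps - D1 \<bullet> (matrix_inv Haa *v D1) - MM"
proof -
  interpret propensity_model M MX MW Z X W
    by (rule propensity_model.intro[OF prob meas_X meas_W meas_Z binary
          cond_indep_vimage_fst[OF A2] A1_overlap]) simp
  define Sa where "Sa = scoreA Z X W eW \<alpha>0"
  define Sg where "Sg = scoreG Z X W eW \<alpha>0"
  define S where "S = (\<lambda>\<omega>. stack (Sa \<omega>) (Sg \<omega>))"
  define \<phi> where "\<phi> = phiRV M Y0 Y1 Z X W eW QW \<delta>"
  define D1 where "D1 = - vexp M (\<lambda>\<omega>. pgrad (\<lambda>a. \<phi> a 0 \<omega>) \<alpha>0)"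
  define D2 where "D2 = - vexp M (\<lambda>\<omega>. pgrad (\<lambda>g. \<phi> \<alpha>0 g \<omega>) 0)"
  have correct_W: "AE \<omega> in M. eW (X \<omega>) (W \<omega>) \<alpha>0 0 = ps \<omega>"
    using correct by (simp add: nested)
  note A = scoreA_moments[OF meas_eW meas_QW correct_W diff_a sq_phi sq_Sa int_Da]
  note G = scoreG_moments[OF meas_eW meas_QW correct_W diff_g sq_phi sq_Sg int_Dg]
  have sq_S: "sqint M (\<lambda>\<omega>. S \<omega> $ j)"
    and mean: "(\<integral>\<omega>. S \<omega> $ j \<partial>M) = 0"
    and cov: "(\<integral>\<omega>. \<phi> \<alpha>0 0 \<omega> * S \<omega> $ j \<partial>M) = stack D1 D2 $ j" for j
    by (cases j, simp_all add: S_def Sa_def Sg_def \<phi>_def D1_def D2_def sq_Sa sq_Sg A G)+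
  have inv_H: "invertible (Hmat M S S)"
    using inv_HW by (simp add: S_def Sa_def Sg_def)
  have "var M (\<lambda>\<omega>. \<phi> \<alpha>0 0 \<omega> - stack D1 D2 \<bullet> (matrix_inv (Hmat M S S) *v S \<omega>))
      = var M (\<phi> \<alpha>0 0) - stack D1 D2 \<bullet> (matrix_inv (Hmat M S S) *v stack D1 D2)"
    using sq_phi by (intro var_minus_projection sq_S mean cov inv_H) (simp add: \<phi>_def)
  with inner_matrix_inv_Hmat_stack[OF inv_HW sq_Sa sq_Sg, of D1 D2] show ?thesis
    by (simp add: Let_def S_def Sa_def Sg_def \<phi>_def D1_def D2_def)
qed

end
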